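(* Let $A$ and $B$ be nonempty proper subsets of $R_n$. Let $d_A^{\perp}$ be the minimum distance of the dual of the cyclic code of length $n$ over $\mathbb{F}_{q^d}$ with complete defining set $A$, and let $d_B$ be the minimum distance of the cyclic code of length $n$ over $\mathbb{F}_{q^d}$ with complete defining set $B$, and suppose $d_A^{\perp}\ge d_B$. If $C$ is a cyclic code of length $n$ over $\mathbb{F}_q$ whose complete defining set contains $AB$, then $C$ has $(d_A^{\perp}-d_B+1,\,d_B)$-locality.
   Context: Let $q$ be a prime power and $n$ a positive integer with $\gcd(n,q)=1$. Let $d$ be the multiplicative order of $q$ modulo $n$, $\alpha\in\mathbb{F}_{q^d}$ a primitive $n$-th root of unity, and $R_n=\{\alpha^j:0\le j\le n-1\}$. For $A,B\subseteq R_n$, $AB=\{\beta\gamma:\beta\in A,\gamma\in B\}$. For any $Z\subseteq R_n$, the cyclic code of length $n$ over $\mathbb{F}_{q^d}$ with complete defining set $Z$ is the ideal generated by $\prod_{\beta\in Z}(x-\beta)$ in $\mathbb{F}_{q^d}[x]/(x^n-1)$, identified with a subspace of $\mathbb{F}_{q^d}^n$ via coefficient vectors. A cyclic code of length $n$ over $\mathbb{F}_q$ is an ideal $\langle g(x)\rangle$ of $\mathbb{F}_q[x]/(x^n-1)$ with $g\mid x^n-1$ monic; its complete defining set is the set of roots of $g$ in $R_n$. Locality: for a linear code $C\subseteq\mathbb{F}^n$ and integers $r\ge1$, $\delta\ge2$, the $i$-th coordinate has $(r,\delta)$-locality if there is $S_i\subseteq\{1,\dots,n\}$ with $i\in S_i$,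 $|S_i|\le r+\delta-1$ such that the punctured code $C|_{S_i}$ (restrictions of codewords to $S_i$) has minimum distance at least $\delta$ (the zero code having infinite minimum distance); $C$ has $(r,\delta)$-locality if every coordinate does. *)

theory Defs
  imports "HOL-Number_Theory.Number_Theory" "HOL-Computational_Algebra.Polynomial"
    "HOL-Library.Extended_Nat"
begin

text \<open>Vectors of length n are functions nat => 'a; only coordinates 0..n-1 matter
  (codewords vanish outside). Coordinates are indexed 0..n-1 instead of 1..n.\<close>

definition hweight :: "nat \<Rightarrow> (nat \<Rightarrow> 'a::zero) \<Rightarrow> nat" where
  "hweight n c = card {i. i < n \<and> c i \<noteq> 0}"

text \<open>Minimum distance; the zero code has infinite minimum distance.\<close>
definition min_dist :: "nat \<Rightarrow> (nat \<Rightarrow> 'a::zero) set \<Rightarrow> enat" where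
  "min_dist n C = (INF c \<in> {c \<in> C. \<exists>i<n. c i \<noteq> 0}. enat (hweight n c))"

definition vec_of :: "'a::zero poly \<Rightarrow> nat \<Rightarrow> 'a" where
  "vec_of p = (\<lambda>i. coeff p i)"

definition xn1 :: "nat \<Rightarrow> 'a::comm_ring_1 poly" where
  "xn1 n = monom 1 n - 1"

text \<open>Ideal generated by g in K[x]/(x^n-1), where K is the coefficient subfield
  given as a subset (elements of the quotient represented by their reduced
  representatives of degree < n), as a set of coefficient vectors.\<close>
definition ideal_code :: "'a::field set \<Rightarrow> nat \<Rightarrow> 'a poly \<Rightarrow> (nat \<Rightarrow> 'a) set" where
  "ideal_code K n g =
     {vec_of ((a * g) mod xn1 n) | a. (\<forall>i. coeff a i \<in> K)}"

definition cyclic_code_defset :: "nat \<Rightarrow> 'a::field set \<Rightarrow> (nat \<Rightarrow> 'a) set" where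
  "cyclic_code_defset n Z = ideal_code UNIV n (\<Prod>\<beta>\<in>Z. [:- \<beta>, 1:])"

definition dual_code :: "nat \<Rightarrow> (nat \<Rightarrow> 'a::field) set \<Rightarrow> (nat \<Rightarrow> 'a) set" where
  "dual_code n C = {v. (\<forall>i\<ge>n. v i = 0) \<and> (\<forall>c\<in>C. (\<Sum>i<n. v i * c i) = 0)}"

definition roots_Rn :: "nat \<Rightarrow> 'a::field \<Rightarrow> 'a set" where
  "roots_Rn n \<alpha> = {\<alpha> ^ j | j. j < n}"

definition setprod :: "'a::times set \<Rightarrow> 'a set \<Rightarrow> 'a set" where
  "setprod A B = {b * c | b c. b \<in> A \<and> c \<in> B}"

definition subfield_q :: "nat \<Rightarrow> 'a::field set" where
  "subfield_q q = {x. x ^ q = x}"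

definition is_cyclic_code_gen :: "'a::field set \<Rightarrow> nat \<Rightarrow> 'a poly \<Rightarrow> (nat \<Rightarrow> 'a) set \<Rightarrow> bool" where
  "is_cyclic_code_gen K n g C \<longleftrightarrow>
     (\<forall>i. coeff g i \<in> K) \<and> lead_coeff g = 1 \<and>
     (\<exists>h. (\<forall>i. coeff h i \<in> K) \<and> g * h = xn1 n) \<and>
     C = ideal_code K n g"

definition complete_defset :: "nat \<Rightarrow> 'a::field \<Rightarrow> 'a poly \<Rightarrow> 'a set" where
  "complete_defset n \<alpha> g = {\<beta> \<in> roots_Rn n \<alpha>. poly g \<beta> = 0}"

definition punct :: "(nat \<Rightarrow> 'a::zero) set \<Rightarrow> nat set \<Rightarrow> (nat \<Rightarrow> 'a) set" where
  "punct C S = (\<lambda>c i. if i \<in> S then c i else 0) ` C"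

definition coord_locality :: "nat \<Rightarrow> (nat \<Rightarrow> 'a::zero) set \<Rightarrow> nat \<Rightarrow> nat \<Rightarrow> nat \<Rightarrow> bool" where
  "coord_locality n C r \<delta> i \<longleftrightarrow>
     (\<exists>S. S \<subseteq> {..<n} \<and> i \<in> S \<and> card S \<le> r + \<delta> - 1 \<and>
          min_dist n (punct C S) \<ge> enat \<delta>)"

definition has_locality :: "nat \<Rightarrow> (nat \<Rightarrow> 'a::zero) set \<Rightarrow> nat \<Rightarrow> nat \<Rightarrow> bool" where
  "has_locality n C r \<delta> \<longleftrightarrow> r \<ge> 1 \<and> \<delta> \<ge> 2 \<and> (\<forall>i<n. coord_locality n C r \<delta> i)"

end

theory Submission
  imports Defs
begin

text \<open>
  Take a word \<open>a\<close> of minimum weight \<open>d\<^sub>A\<^sup>\<bottom>\<close> in the dual of the code \<open>C\<^sub>A\<close> with defining set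
  \<open>A\<close>; since that dual is cyclic, \<open>a\<close> may be shifted so that its support \<open>S\<close> contains any
  prescribed coordinate, and \<open>S\<close> is the repair set. For \<open>c \<in> C\<close> the coordinatewise product
  \<open>a \<cdot> c\<close> lies in \<open>C\<^sub>B\<close>: its value at \<open>\<beta> \<in> B\<close> is the inner product of \<open>a\<close> with the twisted word
  \<open>(c\<^sub>k \<beta>\<^sup>k)\<^sub>k\<close>, which belongs to \<open>C\<^sub>A\<close> because \<open>c\<close> vanishes on \<open>AB\<close>. A nonzero restriction of \<open>c\<close>
  to \<open>S\<close> has the support of \<open>a \<cdot> c\<close>, hence weight at least \<open>d\<^sub>B\<close>, while
  \<open>|S| = d\<^sub>A\<^sup>\<bottom> = (d\<^sub>A\<^sup>\<bottom> - d\<^sub>B + 1) + d\<^sub>B - 1\<close>.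
\<close>

lemma min_dist_attained:
  assumes "c \<in> C" "i < n" "c i \<noteq> 0"
  obtains c' where "c' \<in> C" "\<exists>i<n. c' i \<noteq> 0" "min_dist n C = enat (hweight n c')"
proof -
  let ?W = "(\<lambda>c. enat (hweight n c)) ` {c \<in> C. \<exists>i<n. c i \<noteq> 0}"
  have "Inf ?W \<in> ?W"
    using assms by (intro wellorder_InfI[of "enat (hweight n c)"]) auto
  then obtain c' where "c' \<in> C" "\<exists>i<n. c' i \<noteq> 0" "Inf ?W = enat (hweight n c')"
    by blast
  then show ?thesis
    by (intro that) (simp_all add: min_dist_def)
qed

lemma min_dist_le_hweight:
  assumes "c \<in> C" "\<exists>i<n. c i \<noteq> 0"
  shows "min_dist n C \<le> enat (hweight n c)"
  unfolding min_dist_def using assms by (auto intro!: INF_lower)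

lemma le_min_distI:
  assumes "\<And>c. c \<in> C \<Longrightarrow> \<exists>i<n. c i \<noteq> 0 \<Longrightarrow> \<delta> \<le> hweight n c"
  shows "enat \<delta> \<le> min_dist n C"
  unfolding min_dist_def using assms by (force intro!: INF_greatest)

section \<open>Vectors as polynomials modulo \<open>x\<^sup>n - 1\<close>\<close>

definition eval_vec :: "nat \<Rightarrow> (nat \<Rightarrow> 'a::comm_semiring_1) \<Rightarrow> 'a \<Rightarrow> 'a" where
  "eval_vec n v x = (\<Sum>k<n. v k * x ^ k)"

definition poly_of_vec :: "nat \<Rightarrow> (nat \<Rightarrow> 'a::comm_semiring_1) \<Rightarrow> 'a poly" where
  "poly_of_vec n v = (\<Sum>k<n. monom (v k) k)"

lemma coeff_poly_of_vec: "coeff (poly_of_vec n v) i = (if i < n then v i else 0)"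
  unfolding poly_of_vec_def by (simp add: coeff_sum coeff_monom)

lemma poly_poly_of_vec: "poly (poly_of_vec n v) x = eval_vec n v x"
  unfolding poly_of_vec_def eval_vec_def by (simp add: poly_sum poly_monom)

lemma degree_poly_of_vec:
  assumes "n > 0"
  shows "degree (poly_of_vec n v) < n"
proof -
  have "degree (poly_of_vec n v) \<le> n - 1"
    by (rule degree_le) (auto simp: coeff_poly_of_vec)
  then show ?thesis
    using assms by simp
qed

lemma eval_vec_vec_of:
  assumes "degree p < n"
  shows "eval_vec n (vec_of p) x = poly p x"
proof -
  have "poly p x = (\<Sum>i\<le>degree p. coeff p i * x ^ i)"
    by (rule poly_altdef)
  also have "\<dots> = (\<Sum>i<n. coeff p i * x ^ i)"
    using assms by (intro sum.mono_neutral_left) (auto simp: coeff_eq_0)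
  finally show ?thesis
    by (simp add: eval_vec_def vec_of_def)
qed

lemma degree_xn1: "n > 0 \<Longrightarrow> degree (xn1 n :: 'a::comm_ring_1 poly) = n"
  unfolding xn1_def
  by (subst diff_conv_add_uminus, subst degree_add_eq_left) (auto simp: degree_monom_eq)

lemma degree_mod_xn1:
  assumes "n > 0"
  shows "degree (p mod xn1 n :: 'a::field poly) < n"
proof -
  have "xn1 n \<noteq> (0::'a poly)"
    using degree_xn1[OF assms, where 'a='a] assms by auto
  then show ?thesis
    using degree_mod_less[of "xn1 n" p] assms by (auto simp: degree_xn1)
qed

lemma poly_mod_xn1:
  fixes p :: "'a::field poly"
  assumes "x ^ n = 1"
  shows "poly (p mod xn1 n) x = poly p x"
proof -
  have "poly p x = poly (xn1 n) x * poly (p div xn1 n) x + poly (p mod xn1 n) x"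
    by (metis div_mult_mod_eq mult.commute poly_add poly_mult)
  moreover have "poly (xn1 n) x = 0"
    using assms by (simp add: xn1_def poly_monom)
  ultimately show ?thesis
    by simp
qed

lemma prod_linear_factors_dvd:
  fixes p :: "'a::field poly"
  assumes "finite Z" "\<forall>\<beta>\<in>Z. poly p \<beta> = 0"
  shows "(\<Prod>\<beta>\<in>Z. [:- \<beta>, 1:]) dvd p"
  using assms
proof (induction Z arbitrary: p rule: finite_induct)
  case empty
  then show ?case by simp
next
  case (insert b Z)
  have "(\<Prod>\<beta>\<in>Z. [:- \<beta>, 1:]) dvd p"
    using insert.IH insert.prems by simp
  then obtain r where r: "p = (\<Prod>\<beta>\<in>Z. [:- \<beta>, 1:]) * r"
    by (auto elim: dvdE)
  have "poly (\<Prod>\<beta>\<in>Z. [:- \<beta>, 1:]) b \<noteq> 0"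
    using insert.hyps by (auto simp: poly_prod)
  then have "poly r b = 0"
    using insert.prems r by simp
  then obtain s where "r = [:- b, 1:] * s"
    by (auto simp: poly_eq_0_iff_dvd elim: dvdE)
  then have "p = ([:- b, 1:] * (\<Prod>\<beta>\<in>Z. [:- \<beta>, 1:])) * s"
    using r by (simp only: mult_ac)
  then show ?case
    using insert.hyps by (simp add: dvdI)
qed

section \<open>Cyclic codes as zero sets\<close>

lemma ideal_code_eq_0:
  assumes "c \<in> ideal_code K n g" "n > 0" "n \<le> i"
  shows "c i = 0"
  using assms degree_mod_xn1[OF assms(2)] unfolding ideal_code_def vec_of_def
  by (auto intro!: coeff_eq_0 dest: order.strict_trans2)

lemma eval_vec_ideal_code:
  assumes "c \<in> ideal_code K n g" "n > 0" "x ^ n = 1" "poly g x = 0"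
  shows "eval_vec n c x = 0"
  using assms unfolding ideal_code_def
  by (auto simp: eval_vec_vec_of degree_mod_xn1 poly_mod_xn1)

lemma mem_cyclic_code_defset_iff:
  fixes Z :: "'a::field set"
  assumes "n > 0" "finite Z" "\<forall>\<beta>\<in>Z. \<beta> ^ n = 1"
  shows "v \<in> cyclic_code_defset n Z \<longleftrightarrow> (\<forall>i\<ge>n. v i = 0) \<and> (\<forall>\<beta>\<in>Z. eval_vec n v \<beta> = 0)"
proof
  assume v: "v \<in> cyclic_code_defset n Z"
  have "poly (\<Prod>\<beta>\<in>Z. [:- \<beta>, 1:]) \<beta> = 0" if "\<beta> \<in> Z" for \<beta>
    using assms(2) that by (simp add: poly_prod prod_zero_iff)
  then show "(\<forall>i\<ge>n. v i = 0) \<and> (\<forall>\<beta>\<in>Z. eval_vec n v \<beta> = 0)"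
    using v assms ideal_code_eq_0 eval_vec_ideal_code unfolding cyclic_code_defset_def by blast
next
  assume v: "(\<forall>i\<ge>n. v i = 0) \<and> (\<forall>\<beta>\<in>Z. eval_vec n v \<beta> = 0)"
  let ?p = "poly_of_vec n v"
  have "(\<Prod>\<beta>\<in>Z. [:- \<beta>, 1:]) dvd ?p"
    using assms(2) v by (intro prod_linear_factors_dvd) (auto simp: poly_poly_of_vec)
  then obtain k where k: "?p = (\<Prod>\<beta>\<in>Z. [:- \<beta>, 1:]) * k"
    by (auto elim: dvdE)
  have "?p mod xn1 n = ?p"
    using assms(1) by (intro mod_poly_less) (simp add: degree_poly_of_vec degree_xn1)
  moreover have "vec_of ?p = v"
    using v by (auto simp: vec_of_def coeff_poly_of_vec)
  ultimately have "v = vec_of ((k * (\<Prod>\<beta>\<in>Z. [:- \<beta>, 1:])) mod xn1 n)"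
    using k by (simp add: mult.commute)
  then show "v \<in> cyclic_code_defset n Z"
    unfolding cyclic_code_defset_def ideal_code_def by blast
qed

lemma cyclic_code_defset_nonzero:
  fixes Z :: "'a::field set"
  assumes "finite Z" "card Z < n" "\<forall>\<beta>\<in>Z. \<beta> ^ n = 1"
  obtains v where "v \<in> cyclic_code_defset n Z" "\<exists>i<n. v i \<noteq> 0"
proof -
  let ?g = "\<Prod>\<beta>\<in>Z. [:- \<beta>, 1:]"
  have "degree ?g \<le> card Z"
    using degree_prod_sum_le[OF assms(1), of "\<lambda>\<beta>. [:- \<beta>, 1:]"] by simp
  then have deg: "degree ?g < n"
    using assms(2) by simp
  have "vec_of ?g \<in> cyclic_code_defset n Z"
    using assms deg by (auto simp: mem_cyclic_code_defset_iff eval_vec_vec_of poly_prod)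
      (auto simp: vec_of_def coeff_eq_0)
  moreover have "vec_of ?g (degree ?g) \<noteq> 0"
    using assms(1) by (simp add: vec_of_def)
  ultimately show ?thesis
    using that deg by blast
qed

lemma power_vec_mem_dual_code:
  fixes Z :: "'a::field set"
  assumes "n > 0" "finite Z" "\<forall>\<beta>\<in>Z. \<beta> ^ n = 1" "\<beta> \<in> Z"
  shows "(\<lambda>k. if k < n then \<beta> ^ k else 0) \<in> dual_code n (cyclic_code_defset n Z)"
  using assms by (auto simp: dual_code_def mem_cyclic_code_defset_iff eval_vec_def mult.commute)

lemma dual_cyclic_code_defset_min_weight_word:
  fixes Z :: "'a::field set"
  assumes "n > 0" "finite Z" "\<forall>\<beta>\<in>Z. \<beta> ^ n = 1" "Z \<noteq> {}"
  obtains a where "a \<in> dual_code n (cyclic_code_defset n Z)" "\<exists>i<n. a i \<noteq> 0"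
    "min_dist n (dual_code n (cyclic_code_defset n Z)) = enat (hweight n a)"
proof -
  obtain \<beta> where "\<beta> \<in> Z"
    using assms(4) by blast
  then have "(\<lambda>k. if k < n then \<beta> ^ k else 0) \<in> dual_code n (cyclic_code_defset n Z)"
    by (rule power_vec_mem_dual_code[OF assms(1-3)])
  then show ?thesis
    by (rule min_dist_attained[OF _ assms(1)]) (use assms(1) that in simp_all)
qed

lemma hweight_ge_2:
  fixes v :: "nat \<Rightarrow> 'a::field"
  assumes "eval_vec n v \<beta> = 0" "\<beta> \<noteq> 0" "j < n" "v j \<noteq> 0"
  shows "2 \<le> hweight n v"
proof (rule ccontr)
  let ?S = "{k. k < n \<and> v k \<noteq> 0}"
  assume "\<not> 2 \<le> hweight n v"
  then have "card ?S \<le> Suc 0"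
    unfolding hweight_def by simp
  then have "?S = {j}"
    using assms(3,4) by (auto simp: card_le_Suc0_iff_eq)
  then have "eval_vec n v \<beta> = v j * \<beta> ^ j"
    unfolding eval_vec_def using assms(3) by (subst sum.mono_neutral_right[of "{..<n}" "{j}"]) auto
  with assms show False
    by simp
qed

lemma cyclic_code_defset_min_weight_word:
  fixes Z :: "'a::field set"
  assumes "n > 0" "finite Z" "\<forall>\<beta>\<in>Z. \<beta> ^ n = 1" "Z \<noteq> {}" "card Z < n"
  obtains b where "b \<in> cyclic_code_defset n Z" "2 \<le> hweight n b"
    "min_dist n (cyclic_code_defset n Z) = enat (hweight n b)"
proof -
  obtain v i where "v \<in> cyclic_code_defset n Z" "i < n" "v i \<noteq> 0"
    using cyclic_code_defset_nonzero[OF assms(2,5,3)] by blast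
  then obtain b where b: "b \<in> cyclic_code_defset n Z" "\<exists>i<n. b i \<noteq> 0"
    "min_dist n (cyclic_code_defset n Z) = enat (hweight n b)"
    by (rule min_dist_attained)
  obtain \<beta> where "\<beta> \<in> Z"
    using assms(4) by blast
  then have "eval_vec n b \<beta> = 0" "\<beta> \<noteq> 0"
    using b(1) assms(1,3) mem_cyclic_code_defset_iff[OF assms(1-3)] by (auto simp: power_0_left)
  then have "2 \<le> hweight n b"
    using b(2) hweight_ge_2 by blast
  with b show ?thesis
    using that by blast
qed

section \<open>Cyclic shifts\<close>

definition cyclic_shift :: "nat \<Rightarrow> nat \<Rightarrow> (nat \<Rightarrow> 'a::zero) \<Rightarrow> nat \<Rightarrow> 'a" where
  "cyclic_shift n s v k = (if k < n then v ((k + s) mod n) else 0)"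

lemma bij_betw_add_mod: "bij_betw (\<lambda>k. (k + s) mod n) {..<n} {..<(n::nat)}"
proof -
  have "inj_on (\<lambda>k. (k + s) mod n) {..<n}"
    by (intro inj_onI) (metis cong_add_rcancel_nat cong_def lessThan_iff mod_less)
  moreover have "(\<lambda>k. (k + s) mod n) ` {..<n} \<subseteq> {..<n}"
    by (cases "n = 0") auto
  ultimately show ?thesis
    by (simp add: bij_betw_def endo_inj_surj)
qed

lemma sum_add_mod: "(\<Sum>k<n. f ((k + s) mod n)) = (\<Sum>k<(n::nat). f k)"
  using sum.reindex_bij_betw[OF bij_betw_add_mod] .

lemma power_mod_of_power_eq_1:
  fixes x :: "'a::monoid_mult"
  assumes "x ^ n = 1"
  shows "x ^ (m mod n) = x ^ m"
proof -
  have "x ^ m = (x ^ n) ^ (m div n) * x ^ (m mod n)"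
    by (metis div_mult_mod_eq mult.commute power_add power_mult)
  then show ?thesis
    using assms by simp
qed

lemma cyclic_shift_inverse:
  assumes "t < n" "k < n"
  shows "cyclic_shift n (n - t) v ((k + t) mod n) = v k"
proof -
  have "((k + t) mod n + (n - t)) mod n = (k + t + (n - t)) mod n"
    by (simp only: mod_add_left_eq)
  also have "\<dots> = k"
    using assms by simp
  finally show ?thesis
    using assms by (simp add: cyclic_shift_def)
qed

lemma cyclic_shift_at:
  assumes "i < n" "j < n"
  shows "cyclic_shift n ((j + n - i) mod n) v i = v j"
proof -
  have "(i + (j + n - i) mod n) mod n = (j + n) mod n"
    using assms(1) by (simp add: mod_add_right_eq)
  then show ?thesis
    using assms by (simp add: cyclic_shift_def)
qed

lemma hweight_cyclic_shift: "hweight n (cyclic_shift n s v) = hweight n v"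
proof -
  have "bij_betw (\<lambda>k. (k + s) mod n) {k \<in> {..<n}. v ((k + s) mod n) \<noteq> 0} {m \<in> {..<n}. v m \<noteq> 0}"
    by (rule bij_betw_Collect[OF bij_betw_add_mod]) simp
  moreover have "{k. k < n \<and> cyclic_shift n s v k \<noteq> 0} = {k \<in> {..<n}. v ((k + s) mod n) \<noteq> 0}"
    by (auto simp: cyclic_shift_def)
  ultimately show ?thesis
    unfolding hweight_def by (simp add: bij_betw_same_card)
qed

lemma eval_vec_cyclic_shift:
  fixes \<gamma> :: "'a::comm_semiring_1"
  assumes "\<gamma> ^ n = 1"
  shows "\<gamma> ^ s * eval_vec n (cyclic_shift n s v) \<gamma> = eval_vec n v \<gamma>"
proof -
  have "\<gamma> ^ s * eval_vec n (cyclic_shift n s v) \<gamma> = (\<Sum>k<n. v ((k + s) mod n) * \<gamma> ^ (k + s))"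
    by (simp add: eval_vec_def cyclic_shift_def sum_distrib_left power_add mult_ac)
  also have "\<dots> = (\<Sum>k<n. v ((k + s) mod n) * \<gamma> ^ ((k + s) mod n))"
    by (simp only: power_mod_of_power_eq_1[OF assms])
  also have "\<dots> = eval_vec n v \<gamma>"
    unfolding eval_vec_def by (rule sum_add_mod)
  finally show ?thesis .
qed

lemma cyclic_shift_mem_cyclic_code_defset:
  fixes Z :: "'a::field set"
  assumes "n > 0" "finite Z" "\<forall>\<beta>\<in>Z. \<beta> ^ n = 1" "v \<in> cyclic_code_defset n Z"
  shows "cyclic_shift n s v \<in> cyclic_code_defset n Z"
proof -
  have "eval_vec n (cyclic_shift n s v) \<gamma> = 0" if "\<gamma> \<in> Z" for \<gamma>
  proof -
    have "\<gamma> \<noteq> 0"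
      using assms(1,3) that by (auto simp: power_0_left)
    then show ?thesis
      using eval_vec_cyclic_shift[of \<gamma> n s v] assms that
      by (simp add: mem_cyclic_code_defset_iff)
  qed
  then show ?thesis
    using assms by (simp add: mem_cyclic_code_defset_iff cyclic_shift_def)
qed

lemma inner_cyclic_shift:
  assumes "t < n"
  shows "(\<Sum>k<n. cyclic_shift n t a k * c k) = (\<Sum>k<n. a k * cyclic_shift n (n - t) c k)"
proof -
  have "(\<Sum>k<n. cyclic_shift n t a k * c k)
      = (\<Sum>k<n. a ((k + t) mod n) * cyclic_shift n (n - t) c ((k + t) mod n))"
    using assms by (intro sum.cong refl) (simp add: cyclic_shift_inverse cyclic_shift_def[of n t a])
  also have "\<dots> = (\<Sum>k<n. a k * cyclic_shift n (n - t) c k)"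
    by (rule sum_add_mod)
  finally show ?thesis .
qed

lemma cyclic_shift_mem_dual_code:
  assumes "t < n" "\<And>c s. c \<in> C \<Longrightarrow> cyclic_shift n s c \<in> C" "a \<in> dual_code n C"
  shows "cyclic_shift n t a \<in> dual_code n C"
  using assms by (auto simp: dual_code_def inner_cyclic_shift) (simp add: cyclic_shift_def)

section \<open>Locality from products with dual codewords\<close>

lemma product_mem_cyclic_code_defset:
  fixes A B :: "'a::field set"
  assumes "n > 0" "finite A" "finite B" "\<forall>\<gamma>\<in>A. \<gamma> ^ n = 1" "\<forall>\<beta>\<in>B. \<beta> ^ n = 1"
    and a: "a \<in> dual_code n (cyclic_code_defset n A)"
    and c: "\<And>\<gamma> \<beta>. \<gamma> \<in> A \<Longrightarrow> \<beta> \<in> B \<Longrightarrow> eval_vec n c (\<gamma> * \<beta>) = 0"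
  shows "(\<lambda>k. a k * c k) \<in> cyclic_code_defset n B"
proof -
  have "eval_vec n (\<lambda>k. a k * c k) \<beta> = 0" if "\<beta> \<in> B" for \<beta>
  proof -
    let ?c = "\<lambda>k. if k < n then c k * \<beta> ^ k else 0"
    have "eval_vec n ?c \<gamma> = eval_vec n c (\<gamma> * \<beta>)" for \<gamma>
      by (simp add: eval_vec_def power_mult_distrib mult_ac)
    then have "?c \<in> cyclic_code_defset n A"
      using assms that by (simp add: mem_cyclic_code_defset_iff)
    moreover have "\<And>v. v \<in> cyclic_code_defset n A \<Longrightarrow> (\<Sum>k<n. a k * v k) = 0"
      using a by (simp add: dual_code_def)
    ultimately have "(\<Sum>k<n. a k * ?c k) = 0"
      by blast
    moreover have "(\<Sum>k<n. a k * ?c k) = eval_vec n (\<lambda>k. a k * c k) \<beta>"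
      unfolding eval_vec_def by (intro sum.cong) (simp_all add: mult_ac)
    ultimately show ?thesis
      by simp
  qed
  moreover have "\<forall>i\<ge>n. a i * c i = 0"
    using a by (simp add: dual_code_def)
  ultimately show ?thesis
    using assms by (simp add: mem_cyclic_code_defset_iff)
qed

lemma coord_locality_of_products:
  fixes a :: "nat \<Rightarrow> 'a::semiring_no_zero_divisors"
  assumes "i < n" "a i \<noteq> 0" "hweight n a \<le> r + \<delta> - 1"
    and "\<And>c. c \<in> C \<Longrightarrow> (\<lambda>k. a k * c k) \<in> D" "enat \<delta> \<le> min_dist n D"
  shows "coord_locality n C r \<delta> i"
proof -
  let ?S = "{k. k < n \<and> a k \<noteq> 0}"
  have "enat \<delta> \<le> min_dist n (punct C ?S)"
  proof (rule le_min_distI)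
    fix u assume "u \<in> punct C ?S" and u: "\<exists>i<n. u i \<noteq> 0"
    then obtain c where c: "c \<in> C" "u = (\<lambda>i. if i \<in> ?S then c i else 0)"
      unfolding punct_def by auto
    have supp: "{k. k < n \<and> u k \<noteq> 0} = {k. k < n \<and> a k * c k \<noteq> 0}"
      using c(2) by auto
    have "min_dist n D \<le> enat (hweight n (\<lambda>k. a k * c k))"
      using supp u by (intro min_dist_le_hweight assms(4) c(1)) blast
    then have "enat \<delta> \<le> enat (hweight n (\<lambda>k. a k * c k))"
      using assms(5) by (rule order_trans[rotated])
    then show "\<delta> \<le> hweight n u"
      unfolding hweight_def supp by simp
  qed
  then show ?thesis
    using assms(1-3) unfolding coord_locality_def hweight_def by (intro exI[of _ ?S]) auto
qed

lemma coord_locality_cyclic_code: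
  fixes A B :: "'a::field set"
  assumes "n > 0" "finite A" "finite B" "\<forall>\<gamma>\<in>A. \<gamma> ^ n = 1" "\<forall>\<beta>\<in>B. \<beta> ^ n = 1"
    and a: "a \<in> dual_code n (cyclic_code_defset n A)" "\<exists>j<n. a j \<noteq> 0"
    and C: "\<And>c \<gamma> \<beta>. c \<in> C \<Longrightarrow> \<gamma> \<in> A \<Longrightarrow> \<beta> \<in> B \<Longrightarrow> eval_vec n c (\<gamma> * \<beta>) = 0"
    and weight: "hweight n a \<le> r + \<delta> - 1"
    and dist: "enat \<delta> \<le> min_dist n (cyclic_code_defset n B)"
    and "i < n"
  shows "coord_locality n C r \<delta> i"
proof -
  obtain j where "j < n" "a j \<noteq> 0"
    using a(2) by blast
  let ?a = "cyclic_shift n ((j + n - i) mod n) a"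
  have "?a \<in> dual_code n (cyclic_code_defset n A)"
    using a(1) assms(1-5)
    by (intro cyclic_shift_mem_dual_code cyclic_shift_mem_cyclic_code_defset) auto
  then have products: "(\<lambda>k. ?a k * c k) \<in> cyclic_code_defset n B" if "c \<in> C" for c
    using product_mem_cyclic_code_defset[OF assms(1-5)] C that by blast
  show ?thesis
  proof (rule coord_locality_of_products[OF \<open>i < n\<close> _ _ products])
    show "?a i \<noteq> 0"
      using \<open>i < n\<close> \<open>j < n\<close> \<open>a j \<noteq> 0\<close> by (simp add: cyclic_shift_at)
    show "hweight n ?a \<le> r + \<delta> - 1"
      using weight by (simp add: hweight_cyclic_shift)
  qed (use dist in simp_all)
qed

lemma roots_Rn_eq_image: "roots_Rn n \<alpha> = (\<lambda>j. \<alpha> ^ j) ` {..<n}"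
  unfolding roots_Rn_def by auto

lemma finite_roots_Rn: "finite (roots_Rn n \<alpha>)"
  by (simp add: roots_Rn_eq_image)

lemma card_less_of_psubset_roots_Rn:
  assumes "B \<subset> roots_Rn n \<alpha>"
  shows "card B < n"
proof -
  have "card B < card (roots_Rn n \<alpha>)"
    using assms finite_roots_Rn by (rule psubset_card_mono[rotated])
  also have "\<dots> \<le> n"
    using card_image_le[of "{..<n}" "\<lambda>j. \<alpha> ^ j"] by (simp add: roots_Rn_eq_image)
  finally show ?thesis .
qed

lemma roots_Rn_power_eq_1:
  fixes \<alpha> :: "'a::field"
  assumes "\<alpha> ^ n = 1" "\<beta> \<in> roots_Rn n \<alpha>"
  shows "\<beta> ^ n = 1"
proof -
  obtain j where "\<beta> = \<alpha> ^ j"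
    using assms(2) unfolding roots_Rn_def by blast
  then have "\<beta> ^ n = (\<alpha> ^ n) ^ j"
    by (simp only: power_mult[symmetric] mult.commute)
  then show ?thesis
    using assms(1) by simp
qed

lemma eval_vec_cyclic_code_gen:
  assumes "is_cyclic_code_gen K n g C" "c \<in> C" "n > 0" "\<alpha> ^ n = 1" "x \<in> complete_defset n \<alpha> g"
  shows "eval_vec n c x = 0"
proof -
  have "x ^ n = 1" "poly g x = 0"
    using assms(4,5) roots_Rn_power_eq_1 unfolding complete_defset_def by auto
  moreover have "c \<in> ideal_code K n g"
    using assms(1,2) unfolding is_cyclic_code_gen_def by blast
  ultimately show ?thesis
    using assms(3) by (intro eval_vec_ideal_code)
qed

theorem theorem3p3:
  fixes q n d :: nat and \<alpha> :: "'a::{field,finite}"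
    and A B :: "'a set" and C :: "(nat \<Rightarrow> 'a) set" and g :: "'a poly"
  assumes q_pp: "\<exists>p k. prime p \<and> k > 0 \<and> q = p ^ k"
    and n_pos: "n > 0"
    and cop: "coprime n q"
    and d_def: "d = ord n q"
    and card_field: "card (UNIV :: 'a set) = q ^ d"
    and alpha_root: "\<alpha> ^ n = 1"
    and alpha_prim: "\<forall>k. 0 < k \<and> k < n \<longrightarrow> \<alpha> ^ k \<noteq> 1"
    and A_sub: "A \<subseteq> roots_Rn n \<alpha>" and A_ne: "A \<noteq> {}" and A_prop: "A \<noteq> roots_Rn n \<alpha>"
    and B_sub: "B \<subseteq> roots_Rn n \<alpha>" and B_ne: "B \<noteq> {}" and B_prop: "B \<noteq> roots_Rn n \<alpha>"
    and dist_ge: "min_dist n (dual_code n (cyclic_code_defset n A))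
                    \<ge> min_dist n (cyclic_code_defset n B)"
    and C_cyc: "is_cyclic_code_gen (subfield_q q) n g C"
    and AB_sub: "setprod A B \<subseteq> complete_defset n \<alpha> g"
  shows "has_locality n C
           (the_enat (min_dist n (dual_code n (cyclic_code_defset n A)))
              - the_enat (min_dist n (cyclic_code_defset n B)) + 1)
           (the_enat (min_dist n (cyclic_code_defset n B)))"
proof -
  let ?CB = "cyclic_code_defset n B"
  have fin: "finite A" "finite B"
    using A_sub B_sub finite_roots_Rn by (auto intro: finite_subset)
  have roots: "\<forall>\<gamma>\<in>A. \<gamma> ^ n = 1" "\<forall>\<beta>\<in>B. \<beta> ^ n = 1"
    using A_sub B_sub roots_Rn_power_eq_1[OF alpha_root] by blast+
  have "card B < n"
    using B_sub B_prop by (intro card_less_of_psubset_roots_Rn) auto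
  obtain a where a: "a \<in> dual_code n (cyclic_code_defset n A)" "\<exists>i<n. a i \<noteq> 0"
    "min_dist n (dual_code n (cyclic_code_defset n A)) = enat (hweight n a)"
    by (rule dual_cyclic_code_defset_min_weight_word[OF n_pos fin(1) roots(1) A_ne])
  obtain b where b: "b \<in> ?CB" "2 \<le> hweight n b" "min_dist n ?CB = enat (hweight n b)"
    by (rule cyclic_code_defset_min_weight_word[OF n_pos fin(2) roots(2) B_ne \<open>card B < n\<close>])
  have "coord_locality n C (hweight n a - hweight n b + 1) (hweight n b) i" if "i < n" for i
  proof (rule coord_locality_cyclic_code[OF n_pos fin roots a(1,2) _ _ _ that])
    fix c \<gamma> \<beta> assume "c \<in> C" "\<gamma> \<in> A" "\<beta> \<in> B"
    then show "eval_vec n c (\<gamma> * \<beta>) = 0"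
      using AB_sub eval_vec_cyclic_code_gen[OF C_cyc _ n_pos alpha_root] unfolding setprod_def by blast
  next
    show "hweight n a \<le> hweight n a - hweight n b + 1 + hweight n b - 1"
      by simp
    show "enat (hweight n b) \<le> min_dist n ?CB"
      using b(3) by simp
  qed
  then show ?thesis
    using a(3) b(2,3) unfolding has_locality_def by simp
qed

end
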